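(* Let $q\in\mathbb{C}\setminus\{0,1,-1\}$ and let $a,a^\dagger,N$ be operators satisfying $$aa^\dagger-q\,a^\dagger a=q^{-N},\qquad a^\dagger a=[N],\qquad [N,a]=-a,\qquad [N,a^\dagger]=a^\dagger,$$ where $[X]=\frac{q^{X}-q^{-X}}{q-q^{-1}}$. For $m\in\mathbb{Z}$ put $L_m=-q^{N}(a^\dagger)^{m+1}a$. Define brackets recursively: for $m,k\in\mathbb{Z}$, $$\llbracket L_m,L_k\rrbracket=q^{m-k}L_mL_k-q^{k-m}L_kL_m,$$ and for $n\ge 3$ and $i_1,\dots,i_n\in\mathbb{Z}$, $$\llbracket L_{i_1},\dots,L_{i_n}\rrbracket=\sum_{s=1}^{n}(-1)^{s+1}\,q^{x_n i_s+y_n\sum_{l\neq s}i_l}\,L_{i_s}\,\llbracket L_{i_1},\dots,\widehat{L_{i_s}},\dots,L_{i_n}\rrbracket,$$ where the hat denotes omission, the product on the right is the ordinary operator product, and $(x_3,y_3)=(2,-1)$, $(x_n,y_n)=(n,0)$ for even $n\ge4$, $(x_n,y_n)=(n-1,-2)$ for odd $n\ge5$. Then for every $n\ge 3$ and all $i_1,\dots,i_n\in\mathbb{Z}$, $$\llbracket L_{i_1},\dots,L_{i_n}\rrbracket=\frac{\mathrm{sign}(n)}{(q-q^{-1})^{n-1}}\det\Big(q^{2\left(r-\lfloor\frac{n-1}{2}\rfloor\right)i_j}\Big)_{0\le r\le n-1,\;1\le j\le n}\;L_{i_1+\cdots+i_n},$$ i.e. the rows of the $n\times n$ matrix have exponents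 $-2\lfloor\frac{n-1}{2}\rfloor i_j,\,2(-\lfloor\frac{n-1}{2}\rfloor+1)i_j,\dots,2\lfloor\frac n2\rfloor i_j$ in column $j$, where $\mathrm{sign}(n)=1$ if $n\equiv0,1\pmod 4$ and $\mathrm{sign}(n)=-1$ if $n\equiv 2,3\pmod 4$, and $\lfloor\cdot\rfloor$ is the floor function.
   Context: The operators $a,a^\dagger,N$ form a $q$-deformed oscillator. The two-entry bracket is the $q$-commutator $[A,B]_{(p,r)}=pAB-rBA$ with $(p,r)=(q^{m-k},q^{k-m})$; with it the $L_m$ satisfy $[L_m,L_k]_{(q^{m-k},q^{k-m})}=[m-k]L_{m+k}$ (the $q$-deformed Virasoro–Witt algebra). *)

theory Defs
  imports Complex_Main "Jordan_Normal_Form.Determinant"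
begin

text \<open>The operators live in an associative unital complex algebra, modelled as a
ring 'a together with a central unital ring embedding emb of the complex scalars.\<close>

definition scalar_embedding :: "(complex \<Rightarrow> 'a::ring_1) \<Rightarrow> bool" where
  "scalar_embedding emb \<longleftrightarrow>
     (\<forall>x y. emb (x + y) = emb x + emb y) \<and> (\<forall>x y. emb (x * y) = emb x * emb y) \<and>
     emb 1 = 1 \<and> (\<forall>c X. emb c * X = X * emb c)"

definition zpow :: "'a::ring_1 \<Rightarrow> 'a \<Rightarrow> int \<Rightarrow> 'a" where
  "zpow X Xi k = (if 0 \<le> k then X ^ nat k else Xi ^ nat (- k))"

text \<open>L_m = - q^N (a^dagger)^(m+1) a, where K stands for q^N.\<close>
definition Lop :: "'a::ring_1 \<Rightarrow> 'a \<Rightarrow> 'a \<Rightarrow> 'a \<Rightarrow> int \<Rightarrow> 'a" where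
  "Lop K ad adi a m = - (K * zpow ad adi (m + 1) * a)"

definition xcoef :: "nat \<Rightarrow> int" where
  "xcoef n = (if n = 3 then 2 else if even n then int n else int n - 1)"

definition ycoef :: "nat \<Rightarrow> int" where
  "ycoef n = (if n = 3 then -1 else if even n then 0 else -2)"

definition remove_nth :: "nat \<Rightarrow> 'b list \<Rightarrow> 'b list" where
  "remove_nth s xs = take s xs @ drop (Suc s) xs"

text \<open>qbr d: bracket of a list of length d+2 (recursion depth d).  The index s is
0-based, so (-1)^(s+1) for 1-based s becomes (-1)^s.\<close>
primrec qbr :: "nat \<Rightarrow> (complex \<Rightarrow> 'a::ring_1) \<Rightarrow> complex \<Rightarrow> (int \<Rightarrow> 'a) \<Rightarrow> int list \<Rightarrow> 'a" where
  "qbr 0 emb q L xs = (case xs of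
       [m, k] \<Rightarrow> emb (q powi (m - k)) * L m * L k - emb (q powi (k - m)) * L k * L m
     | _ \<Rightarrow> 0)"
| "qbr (Suc d) emb q L xs =
     (\<Sum>s<length xs. emb ((-1) ^ s * q powi (xcoef (length xs) * xs ! s
                                      + ycoef (length xs) * (sum_list xs - xs ! s)))
                     * L (xs ! s) * qbr d emb q L (remove_nth s xs))"

definition qbracket :: "(complex \<Rightarrow> 'a::ring_1) \<Rightarrow> complex \<Rightarrow> (int \<Rightarrow> 'a) \<Rightarrow> int list \<Rightarrow> 'a" where
  "qbracket emb q L xs = qbr (length xs - 2) emb q L xs"

definition sgn4 :: "nat \<Rightarrow> complex" where
  "sgn4 n = (if n mod 4 = 0 \<or> n mod 4 = 1 then 1 else -1)"

end

theory Submission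
  imports Defs
begin

text \<open>Moving q^N and a through powers of a^\<dagger> gives the product rule
  (q - q^-1) L_m L_k = L_{m+k} - q^{-2m} q^{2N} L_{m+k}.
  Hence, by induction on n, each bracket is a scalar multiple of L_{i_1+...+i_n}, the scalar being,
  up to sign and a power of q, the Vandermonde determinant in z_j = q^{2 i_j}. In the inductive step
  the weights x_n, y_n turn both coefficient sums into Laplace expansions along the last row: with
  last row z^{n-1} one gets the new Vandermonde determinant, while the coefficient of the
  q^{2N}-term has last row z^{n-2}, a repeated row, and vanishes.\<close>

lemma length_remove_nth [simp]:
  "s < length xs \<Longrightarrow> length (remove_nth s xs) = length xs - 1"
  by (simp add: remove_nth_def)

lemma nth_remove_nth:
  "s < length xs \<Longrightarrow> j < length xs - 1 \<Longrightarrow>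
     remove_nth s xs ! j = xs ! (if j < s then j else Suc j)"
  by (auto simp: remove_nth_def nth_append min_def)

lemma remove_nth_map: "remove_nth s (map f xs) = map f (remove_nth s xs)"
  by (simp add: remove_nth_def take_map drop_map)

lemma sum_list_remove_nth:
  "s < length xs \<Longrightarrow> sum_list (remove_nth s xs) = sum_list xs - (xs ! s :: 'a::ab_group_add)"
  by (metis add_diff_cancel_left' id_take_nth_drop remove_nth_def sum_list.Cons sum_list_append
      add.left_commute)

definition vandermonde_det :: "'a::comm_ring_1 list \<Rightarrow> 'a" where
  "vandermonde_det zs = det (mat (length zs) (length zs) (\<lambda>(r, j). zs ! j ^ r))"

lemma vandermonde_det_last_row_expansion:
  fixes zs :: "'a::comm_ring_1 list"
  assumes len: "length zs = Suc m" and p: "p \<le> m"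
  shows "(\<Sum>s<Suc m. (-1) ^ s * zs ! s ^ p * vandermonde_det (remove_nth s zs))
           = (if p = m then (-1) ^ m * vandermonde_det zs else 0)"
proof -
  define B where "B = mat (Suc m) (Suc m) (\<lambda>(r, j). zs ! j ^ (if r = m then p else r))"
  have B: "B \<in> carrier_mat (Suc m) (Suc m)" by (simp add: B_def)
  have minor: "mat_delete B m s = mat m m (\<lambda>(r, j). remove_nth s zs ! j ^ r)" if "s < Suc m" for s
    using that len by (auto simp: mat_delete_def B_def nth_remove_nth intro!: eq_matI)
  have "det B = (\<Sum>s<Suc m. B $$ (m, s) * cofactor B m s)"
    by (rule laplace_expansion_row[OF B]) simp
  also have "\<dots> = (-1) ^ m * (\<Sum>s<Suc m. (-1) ^ s * zs ! s ^ p * vandermonde_det (remove_nth s zs))"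
    unfolding sum_distrib_left
    by (rule sum.cong)
       (use len in \<open>auto simp: cofactor_def minor vandermonde_det_def power_add, auto simp: B_def\<close>)
  finally have expansion:
    "(-1) ^ m * det B = (\<Sum>s<Suc m. (-1) ^ s * zs ! s ^ p * vandermonde_det (remove_nth s zs))"
    by (simp flip: power_add add: mult_2[symmetric])
  show ?thesis
  proof (cases "p = m")
    case True
    then have "B = mat (length zs) (length zs) (\<lambda>(r, j). zs ! j ^ r)"
      using len by (auto simp: B_def intro!: eq_matI)
    with True expansion show ?thesis by (simp add: vandermonde_det_def)
  next
    case False
    then have "det B = 0"
      using p by (intro det_identical_rows[OF B, of p m]) (auto simp: B_def intro!: eq_vecI)
    with False expansion show ?thesis by simp
  qed
qed

lemma vandermonde_det_two: "vandermonde_det [u, v] = v - u"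
proof -
  have "vandermonde_det [w] = 1" for w :: 'a
    by (simp add: vandermonde_det_def det_single)
  then show ?thesis
    using vandermonde_det_last_row_expansion[of "[u, v]" 1 1] by (simp add: remove_nth_def algebra_simps)
qed

lemma det_mat_scale_cols:
  fixes c :: "nat \<Rightarrow> 'a::comm_ring_1"
  shows "det (mat n n (\<lambda>(r, j). f r j * c j)) = det (mat n n (\<lambda>(r, j). f r j)) * (\<Prod>j<n. c j)"
proof -
  have "mat n n (\<lambda>(r, j). f r j * c j) = mat n n (\<lambda>(r, j). f r j) * mat_diag n c"
    by (subst mat_diag_mult_right[of _ n]) auto
  moreover have "det (mat_diag n c) = (\<Prod>j<n. c j)"
    by (subst det_upper_triangular[of _ n])
       (auto simp: mat_diag_def diag_mat_def prod.distinct_set_conv_list[symmetric] atLeast0LessThan)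
  ultimately show ?thesis by (simp add: det_mult[of _ n])
qed

lemma prod_power_int_mult_nth:
  fixes q :: "'a::field"
  assumes "q \<noteq> 0"
  shows "(\<Prod>j<length xs. q powi (c * xs ! j)) = q powi (c * sum_list xs)"
proof (induction xs)
  case (Cons x xs)
  then show ?case
    using assms by (simp add: prod.lessThan_Suc_shift power_int_add distrib_left del: prod.lessThan_Suc)
qed simp

lemma det_mat_power_int_shift:
  fixes q :: "'a::field"
  assumes q: "q \<noteq> 0" and len: "length xs = n"
  shows "det (mat n n (\<lambda>(r, j). q powi (2 * (int r - int h) * xs ! j)))
           = q powi (- (2 * int h) * sum_list xs) * vandermonde_det (map (\<lambda>i. q powi (2 * i)) xs)"
proof -
  have "mat n n (\<lambda>(r, j). q powi (2 * (int r - int h) * xs ! j))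
          = mat n n (\<lambda>(r, j). map (\<lambda>i. q powi (2 * i)) xs ! j ^ r * q powi (- (2 * int h) * xs ! j))"
    using q len by (auto intro!: eq_matI simp: power_int_power' algebra_simps simp flip: power_int_add)
  then show ?thesis
    using len prod_power_int_mult_nth[OF q, of "- (2 * int h)" xs]
    by (simp add: det_mat_scale_cols vandermonde_det_def)
qed

text \<open>For n = 2 the bracket q^{m-k} L_m L_k - q^{k-m} L_k L_m has the same Vandermonde form,
  but with shift 1 instead of 2 \<lfloor>(n-1)/2\<rfloor> = 0.\<close>
definition bracket_shift :: "nat \<Rightarrow> int" where
  "bracket_shift n = (if n = 2 then 1 else 2 * int ((n - 1) div 2))"

definition bracket_coeff :: "complex \<Rightarrow> int list \<Rightarrow> complex" where
  "bracket_coeff q xs = sgn4 (length xs) / (q - 1 / q) ^ (length xs - 1)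
     * q powi (- bracket_shift (length xs) * sum_list xs)
     * vandermonde_det (map (\<lambda>i. q powi (2 * i)) xs)"

lemma sgn4_Suc: "sgn4 (Suc n) = (-1) ^ n * sgn4 n"
proof -
  have "Suc n mod 4 = (n mod 4 + 1) mod 4" "even n \<longleftrightarrow> n mod 4 = 0 \<or> n mod 4 = 2"
    by presburger+
  moreover have "n mod 4 = 0 \<or> n mod 4 = 1 \<or> n mod 4 = 2 \<or> n mod 4 = 3"
    by presburger
  ultimately show ?thesis
    by (auto simp: sgn4_def)
qed

lemma bracket_shift_step:
  assumes "n \<ge> 3"
  shows "xcoef n * i + ycoef n * (S - i) - bracket_shift (n - 1) * (S - i)
           = 2 * int (n - 1) * i - bracket_shift n * S"
proof (cases "even n")
  case True
  then obtain k where k: "n = 2 * k" and "k \<ge> 2"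
    using assms by (auto elim!: evenE)
  then have "(n - 1) div 2 = k - 1" "(n - 1 - 1) div 2 = k - 1" "n \<noteq> 3" "n - 1 \<noteq> 2"
    by presburger+
  with k \<open>k \<ge> 2\<close> have "xcoef n = 2 * int k" "ycoef n = 0" "int (n - 1) = 2 * int k - 1"
    "bracket_shift n = 2 * int k - 2" "bracket_shift (n - 1) = 2 * int k - 2"
    by (simp_all add: xcoef_def ycoef_def bracket_shift_def of_nat_diff)
  then show ?thesis
    by (simp only:) (simp add: algebra_simps)
next
  case False
  then obtain k where k: "n = 2 * k + 1" and "k \<ge> 1"
    using assms by (auto elim!: oddE)
  then have "(n - 1) div 2 = k" "(n - 1 - 1) div 2 = k - 1"
    by presburger+
  with k \<open>k \<ge> 1\<close> have "xcoef n = 2 * int k" "ycoef n = (if k = 1 then -1 else -2)"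
    "int (n - 1) = 2 * int k" "bracket_shift n = 2 * int k"
    "bracket_shift (n - 1) = (if k = 1 then 1 else 2 * int k - 2)"
    by (simp_all add: xcoef_def ycoef_def bracket_shift_def of_nat_diff)
  then show ?thesis
    by (simp only:) (simp add: algebra_simps)
qed

definition bracket_weight :: "complex \<Rightarrow> int list \<Rightarrow> nat \<Rightarrow> complex" where
  "bracket_weight q xs s =
     (-1) ^ s * q powi (xcoef (length xs) * xs ! s + ycoef (length xs) * (sum_list xs - xs ! s))"

lemma bracket_coeff_two:
  assumes "q \<noteq> 0"
  shows "bracket_coeff q [m, k] = (q powi (m - k) - q powi (k - m)) / (q - 1 / q)"
proof -
  have "q powi (- (m + k)) * q powi (2 * j) = q powi (j - (m + k - j))" for j
    using assms by (simp add: power_int_add[symmetric] algebra_simps)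
  then show ?thesis
    by (simp add: bracket_coeff_def bracket_shift_def sgn4_def vandermonde_det_two right_diff_distrib
        diff_divide_distrib algebra_simps)
qed

lemma bracket_coeff_remove_nth:
  fixes q :: complex and xs :: "int list"
  assumes q: "q \<noteq> 0" and len: "length xs = Suc m" and m: "m \<ge> 2" and s: "s < Suc m"
  defines "zs \<equiv> map (\<lambda>i. q powi (2 * i)) xs"
  shows "bracket_weight q xs s * bracket_coeff q (remove_nth s xs)
         = sgn4 m / (q - 1 / q) ^ (m - 1) * q powi (- bracket_shift (Suc m) * sum_list xs)
           * ((-1) ^ s * zs ! s ^ m * vandermonde_det (remove_nth s zs))"
proof -
  let ?S = "sum_list xs"
  have "q powi (xcoef (Suc m) * xs ! s + ycoef (Suc m) * (?S - xs ! s))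
          * q powi (- bracket_shift m * (?S - xs ! s))
        = q powi (2 * int m * xs ! s - bracket_shift (Suc m) * ?S)"
    using bracket_shift_step[of "Suc m" "xs ! s" ?S] m q by (simp flip: power_int_add)
  also have "\<dots> = q powi (- bracket_shift (Suc m) * ?S) * zs ! s ^ m"
    using q s len by (simp add: zs_def power_int_power' flip: power_int_add) (simp add: algebra_simps)
  finally show ?thesis
    using s len
    by (simp add: bracket_weight_def bracket_coeff_def sum_list_remove_nth zs_def remove_nth_map
        numeral_2_eq_2 algebra_simps)
qed

lemma sum_bracket_weight_coeff_power_int:
  fixes q :: complex and xs :: "int list"
  assumes q: "q \<noteq> 0" and len: "length xs = Suc m" and m: "m \<ge> 2" and p: "p \<le> m"
  shows "(\<Sum>s<Suc m. bracket_weight q xs s * bracket_coeff q (remove_nth s xs)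
                       * q powi (2 * (int p - int m) * xs ! s))
         = sgn4 m / (q - 1 / q) ^ (m - 1) * q powi (- bracket_shift (Suc m) * sum_list xs)
           * (if p = m then (-1) ^ m * vandermonde_det (map (\<lambda>i. q powi (2 * i)) xs) else 0)"
proof -
  define zs where "zs = map (\<lambda>i. q powi (2 * i)) xs"
  have z: "zs ! s ^ m * q powi (2 * (int p - int m) * xs ! s) = zs ! s ^ p" if "s < Suc m" for s
    using that len q by (simp add: zs_def power_int_power' flip: power_int_add) (simp add: algebra_simps)
  define c where "c = sgn4 m / (q - 1 / q) ^ (m - 1) * q powi (- bracket_shift (Suc m) * sum_list xs)"
  have "(\<Sum>s<Suc m. bracket_weight q xs s * bracket_coeff q (remove_nth s xs)
                     * q powi (2 * (int p - int m) * xs ! s))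
        = c * (\<Sum>s<Suc m. (-1) ^ s * zs ! s ^ p * vandermonde_det (remove_nth s zs))"
    unfolding sum_distrib_left
  proof (rule sum.cong)
    fix s assume "s \<in> {..<Suc m}"
    then show "bracket_weight q xs s * bracket_coeff q (remove_nth s xs)
                 * q powi (2 * (int p - int m) * xs ! s)
               = c * ((-1) ^ s * zs ! s ^ p * vandermonde_det (remove_nth s zs))"
      using bracket_coeff_remove_nth[OF q len m, of s] z[of s] by (simp add: c_def zs_def mult_ac)
  qed simp
  also have "\<dots> = c * (if p = m then (-1) ^ m * vandermonde_det zs else 0)"
    using vandermonde_det_last_row_expansion[of zs m p] len p by (simp add: zs_def)
  finally show ?thesis
    by (simp add: c_def zs_def)
qed

lemma sum_bracket_weight_coeff:
  fixes q :: complex and xs :: "int list"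
  assumes q: "q \<noteq> 0" "q - 1 / q \<noteq> 0" and len: "length xs \<ge> 3"
  shows "(\<Sum>s<length xs. bracket_weight q xs s * bracket_coeff q (remove_nth s xs))
           = (q - 1 / q) * bracket_coeff q xs"
proof -
  obtain m where m: "length xs = Suc m" "m \<ge> 2"
    using len by (metis Suc_le_D Suc_le_mono eval_nat_numeral(3))
  have "(q - 1 / q) ^ m = (q - 1 / q) * (q - 1 / q) ^ (m - 1)"
    using m(2) by (simp flip: power_Suc)
  then have "x / (q - 1 / q) ^ (m - 1) = (q - 1 / q) * (x / (q - 1 / q) ^ m)" for x
    using q(2) by simp
  then show ?thesis
    using sum_bracket_weight_coeff_power_int[OF q(1) m order_refl]
    by (simp add: m(1) bracket_coeff_def sgn4_Suc mult_ac)
qed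

lemma sum_bracket_weight_coeff_cancel:
  fixes q :: complex and xs :: "int list"
  assumes q: "q \<noteq> 0" and len: "length xs \<ge> 3"
  shows "(\<Sum>s<length xs. bracket_weight q xs s * bracket_coeff q (remove_nth s xs) * q powi (-2 * xs ! s))
           = 0"
proof -
  obtain m where m: "length xs = Suc m" "m \<ge> 2"
    using len by (metis Suc_le_D Suc_le_mono eval_nat_numeral(3))
  moreover have "m - 1 \<noteq> m" "2 * (int (m - 1) - int m) = -2"
    using m(2) by auto
  ultimately show ?thesis
    using sum_bracket_weight_coeff_power_int[OF q m(1,2), of "m - 1"] by simp
qed

lemma zpow_add_one:
  assumes "X * Xi = 1"
  shows "zpow X Xi (j + 1) = X * zpow X Xi j"
proof (cases "j \<ge> 0")
  case True
  then have "nat (j + 1) = Suc (nat j)" by simp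
  with True show ?thesis by (simp add: zpow_def)
next
  case False
  then have "nat (- j) = Suc (nat (- (j + 1)))" by simp
  with False assms show ?thesis
    by (cases "j = -1") (simp_all add: zpow_def mult.assoc[symmetric])
qed

lemma zpow_diff_one:
  assumes "X * Xi = 1" "Xi * X = 1"
  shows "zpow X Xi (j - 1) = Xi * zpow X Xi j"
  using zpow_add_one[OF assms(1), of "j - 1"] assms(2) by (simp add: mult.assoc[symmetric])

lemma zpow_mult_zpow:
  assumes "X * Xi = 1" "Xi * X = 1"
  shows "zpow X Xi i * zpow X Xi j = zpow X Xi (i + j)"
proof (induction i rule: int_induct[where k = 0])
  case base
  then show ?case by (simp add: zpow_def)
next
  case (step1 i)
  have "zpow X Xi (i + 1) * zpow X Xi j = X * (zpow X Xi i * zpow X Xi j)"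
    by (simp add: zpow_add_one[OF assms(1)] mult.assoc)
  also have "\<dots> = zpow X Xi (i + j + 1)"
    using step1 by (simp add: zpow_add_one[OF assms(1)])
  finally show ?case
    by (simp add: algebra_simps)
next
  case (step2 i)
  then show ?case
    using zpow_diff_one[OF assms] by (simp add: mult.assoc algebra_simps)
qed

locale scalar_algebra =
  fixes emb :: "complex \<Rightarrow> 'a::ring_1"
  assumes scalar_embedding: "scalar_embedding emb"
begin

definition scale :: "complex \<Rightarrow> 'a \<Rightarrow> 'a" (infixr "\<cdot>" 75) where
  "c \<cdot> X = emb c * X"

lemma emb_add: "emb (x + y) = emb x + emb y"
  and emb_mult: "emb (x * y) = emb x * emb y"
  and emb_one: "emb 1 = 1"
  and emb_commute: "emb c * X = X * emb c"
  using scalar_embedding unfolding scalar_embedding_def by blast+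

lemma emb_zero: "emb 0 = 0"
  using emb_add[of 0 0] by simp

lemma emb_diff: "emb (x - y) = emb x - emb y"
  using emb_add[of "x - y" y] by (simp add: algebra_simps)

lemma scale_mult_left [simp]: "(c \<cdot> X) * Y = c \<cdot> (X * Y)"
  by (simp add: scale_def mult.assoc)

lemma scale_mult_right [simp]: "X * (c \<cdot> Y) = c \<cdot> (X * Y)"
  unfolding scale_def by (simp only: mult.assoc[symmetric] emb_commute[of c X])

lemma scale_scale [simp]: "c \<cdot> (d \<cdot> X) = (c * d) \<cdot> X"
  by (simp add: scale_def emb_mult mult.assoc)

lemma scale_one [simp]: "1 \<cdot> X = X"
  by (simp add: scale_def emb_one)

lemma scale_minus_right [simp]: "c \<cdot> (- X) = - (c \<cdot> X)"
  by (simp add: scale_def)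

lemma scale_zero_left [simp]: "0 \<cdot> X = 0"
  by (simp add: scale_def emb_zero)

lemma scale_minus_left [simp]: "(- c) \<cdot> X = - (c \<cdot> X)"
  using emb_diff[of 0 c] by (simp add: scale_def emb_zero)

lemma scale_add_right: "c \<cdot> (X + Y) = c \<cdot> X + c \<cdot> Y"
  and scale_diff_right: "c \<cdot> (X - Y) = c \<cdot> X - c \<cdot> Y"
  by (simp_all add: scale_def algebra_simps)

lemma scale_diff_left: "(c - d) \<cdot> X = c \<cdot> X - d \<cdot> X"
  by (simp add: scale_def emb_diff algebra_simps)

lemma scale_sum_left: "(\<Sum>s\<in>A. f s) \<cdot> X = (\<Sum>s\<in>A. f s \<cdot> X)"
  by (induction A rule: infinite_finite_induct) (simp_all add: scale_def emb_zero emb_add distrib_right)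

lemma scale_commute_inverse:
  assumes "X * Xi = 1" "Xi * X = 1" and "X * Y = c \<cdot> (Y * X)" and "c \<noteq> 0"
  shows "Xi * Y = inverse c \<cdot> (Y * Xi)"
proof -
  have "Xi * (X * Y) * Xi = Y * Xi"
    using assms(2) by (simp add: mult.assoc[symmetric])
  then have "c \<cdot> (Xi * Y) = Y * Xi"
    using assms(1,3) by (simp add: mult.assoc)
  then have "inverse c \<cdot> (c \<cdot> (Xi * Y)) = inverse c \<cdot> (Y * Xi)"
    by simp
  then show ?thesis
    using assms(4) by simp
qed

lemma zpow_commute_scale:
  assumes inv: "X * Xi = 1" "Xi * X = 1" and comm: "X * Y = c \<cdot> (Y * X)" and c: "c \<noteq> 0"
  shows "zpow X Xi j * Y = c powi j \<cdot> (Y * zpow X Xi j)"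
proof (induction j rule: int_induct[where k = 0])
  case base
  then show ?case by (simp add: zpow_def)
next
  case (step1 i)
  have "X * (Y * W) = c \<cdot> (Y * (X * W))" for W
    using comm by (simp flip: mult.assoc)
  with step1 c show ?case
    by (simp add: zpow_add_one[OF inv(1)] mult.assoc power_int_add mult.commute)
next
  case (step2 i)
  have "Xi * (Y * W) = inverse c \<cdot> (Y * (Xi * W))" for W
    using scale_commute_inverse[OF inv comm c] by (simp flip: mult.assoc)
  with step2 c show ?case
    by (simp add: zpow_diff_one[OF inv] mult.assoc power_int_diff field_simps)
qed

end

locale q_oscillator = scalar_algebra emb for emb :: "complex \<Rightarrow> 'a::ring_1" +
  fixes q :: complex and a ad adi K Kinv :: 'a
  assumes q0: "q \<noteq> 0" and q1: "q \<noteq> 1" and qm1: "q \<noteq> -1"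
    and K_Kinv: "K * Kinv = 1" and Kinv_K: "Kinv * K = 1"
    and ad_adi: "ad * adi = 1" and adi_ad: "adi * ad = 1"
    and rel1: "a * ad - emb q * ad * a = Kinv"
    and rel2: "ad * a = emb (1 / (q - 1 / q)) * (K - Kinv)"
    and rel3: "K * a = emb (1 / q) * a * K"
    and rel4: "K * ad = emb q * ad * K"
begin

abbreviation "L \<equiv> Lop K ad adi a"
abbreviation "Z \<equiv> zpow ad adi"

lemma q_diff_inverse_nonzero: "q - 1 / q \<noteq> 0"
proof
  assume "q - 1 / q = 0"
  then have "(q - 1) * (q + 1) = 0"
    using q0 by (simp add: field_simps)
  then show False
    using q1 qm1 by (simp add: add_eq_0_iff2)
qed

lemma a_K: "a * K = q \<cdot> (K * a)"
proof -
  have "K * a = (1 / q) \<cdot> (a * K)"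
    using rel3 by (simp add: scale_def mult.assoc)
  then show ?thesis
    using q0 by simp
qed

lemma ad_K: "ad * K = (1 / q) \<cdot> (K * ad)"
proof -
  have "K * ad = q \<cdot> (ad * K)"
    using rel4 by (simp add: scale_def mult.assoc)
  then show ?thesis
    using q0 by simp
qed

lemma Z_K: "Z j * K = q powi (- j) \<cdot> (K * Z j)"
  using zpow_commute_scale[OF ad_adi adi_ad ad_K] q0
  by (simp add: power_int_minus power_int_divide_distrib inverse_eq_divide)

lemma Z_Kinv: "Z j * Kinv = q powi j \<cdot> (Kinv * Z j)"
proof -
  have "K * ad = q \<cdot> (ad * K)"
    using ad_K q0 by simp
  then have "Kinv * ad = (1 / q) \<cdot> (ad * Kinv)"
    using scale_commute_inverse[OF K_Kinv Kinv_K] q0 by (simp add: divide_inverse)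
  then have "ad * Kinv = q \<cdot> (Kinv * ad)"
    using q0 by simp
  then show ?thesis
    using zpow_commute_scale[OF ad_adi adi_ad] q0 by blast
qed

lemma a_ad: "a * ad = (q / (q - 1 / q)) \<cdot> K + (1 - q / (q - 1 / q)) \<cdot> Kinv"
proof -
  have "a * ad = q \<cdot> (ad * a) + Kinv"
    using rel1 by (simp add: scale_def algebra_simps)
  then show ?thesis
    using rel2 by (simp add: scale_def[symmetric] scale_diff_right scale_diff_left algebra_simps)
qed

lemma L_mult_L:
  "L m * L k = (1 / (q - 1 / q)) \<cdot> L (m + k)
                - (q powi (-2 * m) / (q - 1 / q)) \<cdot> (K * (K * L (m + k)))"
proof -
  define d where "d = q - 1 / q"
  define W where "W = Z k * a"
  define V where "V = Z (m + k + 1) * a"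
  have L_eq: "L j = - (K * (Z (j + 1) * a))" for j
    by (simp add: Lop_def mult.assoc)
  have a_KY: "a * (K * Y) = q \<cdot> (K * (a * Y))" for Y
    by (simp add: a_K flip: mult.assoc)
  have Z_KY: "Z j * (K * Y) = q powi (- j) \<cdot> (K * (Z j * Y))" for j Y
    by (simp add: Z_K flip: mult.assoc)
  have Z_KinvY: "Z j * (Kinv * Y) = q powi j \<cdot> (Kinv * (Z j * Y))" for j Y
    by (simp add: Z_Kinv flip: mult.assoc)
  have K_Kinv_Y: "K * (Kinv * Y) = Y" for Y
    by (simp add: K_Kinv flip: mult.assoc)
  have Z_W: "Z (m + 1) * W = V"
    by (simp add: W_def V_def zpow_mult_zpow[OF ad_adi adi_ad] algebra_simps flip: mult.assoc)
  have a_Za: "a * (Z (k + 1) * a) = (q / d) \<cdot> (K * W) + (1 - q / d) \<cdot> (Kinv * W)"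
    by (simp add: W_def d_def zpow_add_one[OF ad_adi] a_ad distrib_right flip: mult.assoc)
  have "L m * L k = K * (Z (m + 1) * (a * (K * (Z (k + 1) * a))))"
    by (simp add: L_eq mult.assoc)
  also have "\<dots> = (q * q powi (- (m + 1))) \<cdot> (K * (K * (Z (m + 1) * (a * (Z (k + 1) * a)))))"
    by (simp add: a_KY Z_KY)
  also have "\<dots> = (q * q powi (- (m + 1)) * (q / d) * q powi (- (m + 1))) \<cdot> (K * (K * (K * V)))
                 + (q * q powi (- (m + 1)) * (1 - q / d) * q powi (m + 1)) \<cdot> (K * V)"
    by (simp add: a_Za distrib_left scale_add_right Z_KY Z_KinvY Z_W K_Kinv_Y mult.assoc)
  also have "q * q powi (- (m + 1)) * (q / d) * q powi (- (m + 1)) = q powi (-2 * m) / d"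
    using q0 power_int_add[of q m m]
    by (simp add: field_simps power_int_diff power_int_add power_int_minus)
  also have "q * q powi (- (m + 1)) * (1 - q / d) * q powi (m + 1) = - (1 / d)"
  proof -
    have "q powi (- (m + 1)) * q powi (m + 1) = 1"
      using q0 by (simp flip: power_int_add)
    moreover have "q * (1 - q / d) = - (1 / d)"
      using q0 q_diff_inverse_nonzero by (simp add: d_def field_simps)
    ultimately show ?thesis
      by (metis mult.commute mult.left_commute mult_1)
  qed
  finally show ?thesis
    by (simp add: d_def L_eq V_def)
qed

lemma sum_scale_L_mult_L:
  "(\<Sum>s\<in>A. c s \<cdot> (L (x s) * L (S - x s)))
     = ((\<Sum>s\<in>A. c s) / (q - 1 / q)) \<cdot> L S
       - ((\<Sum>s\<in>A. c s * q powi (-2 * x s)) / (q - 1 / q)) \<cdot> (K * (K * L S))"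
  by (simp add: L_mult_L scale_diff_right scale_diff_left scale_sum_left sum_subtractf
      sum_divide_distrib)

lemma qbr_Lop: "length xs = d + 2 \<Longrightarrow> qbr d emb q L xs = bracket_coeff q xs \<cdot> L (sum_list xs)"
proof (induction d arbitrary: xs)
  case 0
  then obtain m k where xs: "xs = [m, k]"
    by (cases xs; cases "tl xs") auto
  let ?c = "[q powi (m - k), - (q powi (k - m))]"
  have "qbr 0 emb q L xs = (\<Sum>s<2. ?c ! s \<cdot> (L (xs ! s) * L (m + k - xs ! s)))"
    by (simp add: xs numeral_2_eq_2 flip: scale_def)
  also have "\<dots> = bracket_coeff q xs \<cdot> L (m + k)"
  proof -
    have "q powi (m - k) * q powi (-2 * m) = q powi (k - m) * q powi (-2 * k)"
      using q0 by (simp flip: power_int_add add: algebra_simps)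
    then show ?thesis
      using q0 by (simp add: sum_scale_L_mult_L xs numeral_2_eq_2 bracket_coeff_two)
  qed
  finally show ?case
    by (simp add: xs)
next
  case (Suc d)
  let ?n = "length xs" and ?S = "sum_list xs"
  let ?c = "\<lambda>s. bracket_weight q xs s * bracket_coeff q (remove_nth s xs)"
  have "qbr (Suc d) emb q L xs
          = (\<Sum>s<?n. emb (bracket_weight q xs s) * L (xs ! s) * qbr d emb q L (remove_nth s xs))"
    by (simp add: bracket_weight_def)
  also have "\<dots> = (\<Sum>s<?n. ?c s \<cdot> (L (xs ! s) * L (?S - xs ! s)))"
  proof (rule sum.cong)
    fix s assume "s \<in> {..<?n}"
    then have "qbr d emb q L (remove_nth s xs) = bracket_coeff q (remove_nth s xs) \<cdot> L (?S - xs ! s)"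
      using Suc by (simp add: sum_list_remove_nth)
    then show "emb (bracket_weight q xs s) * L (xs ! s) * qbr d emb q L (remove_nth s xs)
                 = ?c s \<cdot> (L (xs ! s) * L (?S - xs ! s))"
      by (simp add: mult.commute flip: scale_def)
  qed simp
  also have "\<dots> = bracket_coeff q xs \<cdot> L ?S"
  proof -
    have n: "?n \<ge> 3"
      using Suc.prems by simp
    show ?thesis
      unfolding sum_scale_L_mult_L sum_bracket_weight_coeff[OF q0 q_diff_inverse_nonzero n]
        sum_bracket_weight_coeff_cancel[OF q0 n]
      using q_diff_inverse_nonzero by simp
  qed
  finally show ?case .
qed

end

theorem theorem3:
  fixes emb :: "complex \<Rightarrow> 'a::ring_1"
    and q :: complex
    and a ad adi K Kinv :: 'a
    and n :: nat and xs :: "int list"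
  assumes emb: "scalar_embedding emb"
    and q0: "q \<noteq> 0" and q1: "q \<noteq> 1" and qm1: "q \<noteq> -1"
    and K_inv: "K * Kinv = 1" "Kinv * K = 1"
    and ad_inv: "ad * adi = 1" "adi * ad = 1"
    and rel1: "a * ad - emb q * ad * a = Kinv"
    and rel2: "ad * a = emb (1 / (q - 1 / q)) * (K - Kinv)"
    and rel3: "K * a = emb (1 / q) * a * K"
    and rel4: "K * ad = emb q * ad * K"
    and n: "n \<ge> 3" "length xs = n"
  shows "qbracket emb q (Lop K ad adi a) xs =
           emb (sgn4 n / (q - 1 / q) ^ (n - 1)
                * det (mat n n (\<lambda>(r, j). q powi (2 * (int r - int ((n - 1) div 2)) * xs ! j))))
           * Lop K ad adi a (sum_list xs)"
proof -
  interpret q_oscillator emb q a ad adi K Kinv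
    using assms by unfold_locales auto
  have "qbracket emb q L xs = bracket_coeff q xs \<cdot> L (sum_list xs)"
    unfolding qbracket_def using qbr_Lop[of xs "n - 2"] n by simp
  also have "bracket_coeff q xs = sgn4 n / (q - 1 / q) ^ (n - 1)
      * det (mat n n (\<lambda>(r, j). q powi (2 * (int r - int ((n - 1) div 2)) * xs ! j)))"
    using n det_mat_power_int_shift[OF q0 n(2), of "(n - 1) div 2"]
    by (simp add: bracket_coeff_def bracket_shift_def)
  finally show ?thesis
    by (simp add: scale_def)
qed

end
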